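(* Let $R$ be a ringed tree with at least $\ell+1$ levels, where $\ell\ge 2$, and let $u_1,u_2,\dots,u_{2^\ell}$ be the vertices of level $\ell$ in their cyclic order along the level-$\ell$ cycle. Then for every tree decomposition $(T,\phi)$ of $R$ there exist a node $w\in V(T)$ and indices $i<j$ with $u_i,u_j\in\phi^{-1}(w)$ and $\min\{j-i,\ 2^\ell+i-j\}\ge 2^{\ell-2}$.
   Context: A ringed tree with levels $0,1,\dots,L$ has vertices $v_{k,j}$ for $0\le k\le L$, $1\le j\le 2^k$; its edges are the edges of the complete binary tree ($v_{k,j}$ adjacent to $v_{k+1,2j-1}$ and $v_{k+1,2j}$) together with, for each level $k$, the cycle $v_{k,1}v_{k,2}\cdots v_{k,2^k}v_{k,1}$ joining consecutive vertices of that level. A tree decomposition of a graph $H$ is a pair $(T,\phi)$ where $T$ is a tree and $\phi$ assigns to each vertex $x$ of $H$ a (nonempty) subtree $\phi(x)$ of $T$ such that $\phi(x)\cap\phi(y)\ne\emptyset$ whenever $xy\in E(H)$; for a node $t$ of $T$, $\phi^{-1}(t)=\{x\in V(H): t\in\phi(x)\}$. *)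

theory Defs
  imports Main
begin

definition is_path :: "('b \<Rightarrow> 'b \<Rightarrow> bool) \<Rightarrow> 'b set \<Rightarrow> 'b list \<Rightarrow> bool" where
  "is_path E S p \<longleftrightarrow> p \<noteq> [] \<and> set p \<subseteq> S \<and> (\<forall>i. Suc i < length p \<longrightarrow> E (p ! i) (p ! Suc i))"

definition connected_on :: "('b \<Rightarrow> 'b \<Rightarrow> bool) \<Rightarrow> 'b set \<Rightarrow> bool" where
  "connected_on E S \<longleftrightarrow> (\<forall>x\<in>S. \<forall>y\<in>S. \<exists>p. is_path E S p \<and> hd p = x \<and> last p = y)"

definition has_cycle :: "'b set \<Rightarrow> ('b \<Rightarrow> 'b \<Rightarrow> bool) \<Rightarrow> bool" where
  "has_cycle V E \<longleftrightarrow> (\<exists>p. is_path E V p \<and> distinct p \<and> length p \<ge> 3 \<and> E (last p) (hd p))"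

definition is_tree :: "'b set \<Rightarrow> ('b \<Rightarrow> 'b \<Rightarrow> bool) \<Rightarrow> bool" where
  "is_tree V E \<longleftrightarrow> finite V \<and> V \<noteq> {}
     \<and> (\<forall>x y. E x y \<longrightarrow> x \<in> V \<and> y \<in> V \<and> E y x \<and> x \<noteq> y)
     \<and> connected_on E V \<and> \<not> has_cycle V E"

definition is_subtree :: "'b set \<Rightarrow> ('b \<Rightarrow> 'b \<Rightarrow> bool) \<Rightarrow> 'b set \<Rightarrow> bool" where
  "is_subtree V E S \<longleftrightarrow> S \<noteq> {} \<and> S \<subseteq> V \<and> connected_on E S"

definition tree_decomposition ::
  "'a set \<Rightarrow> ('a \<Rightarrow> 'a \<Rightarrow> bool) \<Rightarrow> 'b set \<Rightarrow> ('b \<Rightarrow> 'b \<Rightarrow> bool) \<Rightarrow> ('a \<Rightarrow> 'b set) \<Rightarrow> bool" where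
  "tree_decomposition VH EH VT ET phi \<longleftrightarrow> is_tree VT ET
     \<and> (\<forall>x\<in>VH. is_subtree VT ET (phi x))
     \<and> (\<forall>x\<in>VH. \<forall>y\<in>VH. EH x y \<longrightarrow> phi x \<inter> phi y \<noteq> {})"

text \<open>Vertex v_{k,j} is represented by the pair (k,j).\<close>
definition ringed_verts :: "nat \<Rightarrow> (nat \<times> nat) set" where
  "ringed_verts L = {(k, j). k \<le> L \<and> 1 \<le> j \<and> j \<le> 2 ^ k}"

text \<open>Directed version of the edges: tree edges and level-cycle edges.\<close>
definition ringed_arc :: "nat \<Rightarrow> nat \<times> nat \<Rightarrow> nat \<times> nat \<Rightarrow> bool" where
  "ringed_arc L x y \<longleftrightarrow> x \<in> ringed_verts L \<and> y \<in> ringed_verts L \<and>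
     ((fst y = Suc (fst x) \<and> (snd y = 2 * snd x - 1 \<or> snd y = 2 * snd x))
      \<or> (fst y = fst x \<and> (snd y = Suc (snd x) \<or> (snd x = 2 ^ fst x \<and> snd y = 1))))"

definition ringed_edge :: "nat \<Rightarrow> nat \<times> nat \<Rightarrow> nat \<times> nat \<Rightarrow> bool" where
  "ringed_edge L x y \<longleftrightarrow> ringed_arc L x y \<or> ringed_arc L y x"

end

theory Submission
  imports Defs
begin

text \<open>The bags of the level-\<open>\<ell>\<close> vertices \<open>u\<^sub>1, \<dots>, u\<^sub>n\<close> (\<open>n = 2\<^sup>\<ell> = 4m\<close>) form a cyclic chain of
  subtrees of \<open>T\<close> in which consecutive members meet. Split the cycle into arcs of \<open>m\<close>, \<open>m\<close> and \<open>2m\<close>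
  consecutive vertices: the unions of the bags along the arcs are pairwise intersecting subtrees, so
  by the Helly property of subtrees of a tree they share a node \<open>w\<close>. If \<open>w\<close> lies in the bags of
  \<open>u\<^sub>a, u\<^sub>b, u\<^sub>c\<close> with \<open>a, b, c\<close> in the three arcs, then \<open>(b, c)\<close> or \<open>(a, c)\<close> is a pair at cyclic
  distance at least \<open>m\<close>.\<close>

lemma is_path_iff_successively:
  "is_path E S p \<longleftrightarrow> p \<noteq> [] \<and> set p \<subseteq> S \<and> successively E p"
  unfolding is_path_def successively_conv_nth by blast

lemma connected_on_iff_rtranclp:
  "connected_on E S \<longleftrightarrow> (\<forall>x\<in>S. \<forall>y\<in>S. (\<lambda>a b. E a b \<and> a \<in> S \<and> b \<in> S)\<^sup>*\<^sup>* x y)"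
proof -
  let ?R = "\<lambda>a b. E a b \<and> a \<in> S \<and> b \<in> S"
  have walk_reach: "?R\<^sup>*\<^sup>* (hd p) (last p)"
    if "p \<noteq> []" "set p \<subseteq> S" "successively E p" for p
    using that
  proof (induction p)
    case (Cons x xs)
    show ?case
    proof (cases xs)
      case (Cons y ys)
      with Cons.prems Cons.IH have "?R x y" "?R\<^sup>*\<^sup>* y (last xs)" by auto
      then have "?R\<^sup>*\<^sup>* x (last xs)" by (rule converse_rtranclp_into_rtranclp)
      with Cons show ?thesis by simp
    qed simp
  qed simp
  have reach_walk: "\<exists>p. p \<noteq> [] \<and> set p \<subseteq> S \<and> successively E p \<and> hd p = x \<and> last p = y"
    if "?R\<^sup>*\<^sup>* x y" "x \<in> S" for x y
    using that
  proof (induction rule: rtranclp_induct)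
    case base
    then show ?case by (intro exI[of _ "[x]"]) auto
  next
    case (step y z)
    then obtain p where "p \<noteq> []" "set p \<subseteq> S" "successively E p" "hd p = x" "last p = y"
      by blast
    with step.hyps(2) show ?case
      by (intro exI[of _ "p @ [z]"]) (auto simp: successively_append_iff)
  qed
  show ?thesis
    unfolding connected_on_def is_path_iff_successively
  proof (intro iffI ballI)
    fix x y assume "\<forall>x\<in>S. \<forall>y\<in>S. \<exists>p. (p \<noteq> [] \<and> set p \<subseteq> S \<and> successively E p) \<and> hd p = x \<and> last p = y"
      and "x \<in> S" "y \<in> S"
    then obtain p where "p \<noteq> []" "set p \<subseteq> S" "successively E p" "hd p = x" "last p = y"
      by blast
    with walk_reach show "?R\<^sup>*\<^sup>* x y" by blast
  next
    fix x y assume "\<forall>x\<in>S. \<forall>y\<in>S. ?R\<^sup>*\<^sup>* x y" and "x \<in> S" "y \<in> S"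
    with reach_walk show "\<exists>p. (p \<noteq> [] \<and> set p \<subseteq> S \<and> successively E p) \<and> hd p = x \<and> last p = y"
      by blast
  qed
qed

lemma connected_on_Un:
  assumes "connected_on E A" "connected_on E B" "A \<inter> B \<noteq> {}"
  shows "connected_on E (A \<union> B)"
  unfolding connected_on_iff_rtranclp
proof (intro ballI)
  let ?R = "\<lambda>S a b. E a b \<and> a \<in> S \<and> b \<in> S"
  have reach: "(?R (A \<union> B))\<^sup>*\<^sup>* x y"
    if "connected_on E X" "X \<subseteq> A \<union> B" "x \<in> X" "y \<in> X" for X x y
  proof -
    have "?R X \<le> ?R (A \<union> B)" using that(2) by auto
    moreover have "(?R X)\<^sup>*\<^sup>* x y" using that(1,3,4) unfolding connected_on_iff_rtranclp by blast
    ultimately show ?thesis by (rule rtranclp_mono[THEN predicate2D])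
  qed
  obtain z where z: "z \<in> A" "z \<in> B" using assms(3) by blast
  fix x y assume "x \<in> A \<union> B" "y \<in> A \<union> B"
  then have "(?R (A \<union> B))\<^sup>*\<^sup>* x z" "(?R (A \<union> B))\<^sup>*\<^sup>* z y"
    using reach[OF assms(1)] reach[OF assms(2)] z by auto
  then show "(?R (A \<union> B))\<^sup>*\<^sup>* x y" by (rule rtranclp_trans)
qed

lemma connected_on_UN_chain:
  assumes "a \<le> b"
    and "\<And>i. a \<le> i \<Longrightarrow> i \<le> b \<Longrightarrow> connected_on E (S i)"
    and "\<And>i. a \<le> i \<Longrightarrow> i < b \<Longrightarrow> S i \<inter> S (Suc i) \<noteq> {}"
  shows "connected_on E (\<Union>i\<in>{a..b}. S i)"
  using assms(1)
proof (induction b rule: dec_induct)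
  case base
  then show ?case using assms(1,2) by simp
next
  case (step n)
  have "S n \<subseteq> (\<Union>i\<in>{a..n}. S i)" using step.hyps(1) by auto
  with assms(3)[of n] step.hyps have "(\<Union>i\<in>{a..n}. S i) \<inter> S (Suc n) \<noteq> {}" by blast
  with step.IH assms(2)[of "Suc n"] step.hyps
  have "connected_on E ((\<Union>i\<in>{a..n}. S i) \<union> S (Suc n))"
    by (intro connected_on_Un) auto
  moreover have "(\<Union>i\<in>{a..Suc n}. S i) = (\<Union>i\<in>{a..n}. S i) \<union> S (Suc n)"
    using step.hyps(1) by (auto simp: atLeastAtMostSuc_conv)
  ultimately show ?case by simp
qed

lemma connected_on_neighbour:
  assumes "connected_on E X" "v \<in> X" "w \<in> X" "w \<noteq> v"
  shows "\<exists>p\<in>X. E v p"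
proof -
  have "(\<lambda>a b. E a b \<and> a \<in> X \<and> b \<in> X)\<^sup>*\<^sup>* v w"
    using assms unfolding connected_on_iff_rtranclp by blast
  then show ?thesis
    by (cases rule: converse_rtranclpE) (use assms(4) in auto)
qed

text \<open>Removing a vertex with at most one neighbour keeps a set connected: project every
  walk by sending the vertex to its neighbour.\<close>
lemma connected_on_Diff_leaf:
  assumes conn: "connected_on E X" and sym: "\<And>x y. E x y \<Longrightarrow> E y x"
    and leaf: "\<And>q q'. q \<in> X \<Longrightarrow> q' \<in> X \<Longrightarrow> E v q \<Longrightarrow> E v q' \<Longrightarrow> q = q'"
  shows "connected_on E (X - {v})"
proof -
  let ?R = "\<lambda>S a b. E a b \<and> a \<in> S \<and> b \<in> S"
  define p where "p = (SOME p. p \<in> X \<and> E v p)"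
  define proj where "proj a = (if a = v then p else a)" for a
  have p_eq: "p = q" if "q \<in> X" "E v q" for q
  proof -
    have "p \<in> X \<and> E v p"
      unfolding p_def by (rule someI[of "\<lambda>p. p \<in> X \<and> E v p" q]) (use that in simp)
    with leaf that show ?thesis by blast
  qed
  have proj_reach: "(?R (X - {v}))\<^sup>*\<^sup>* (proj x) (proj y)" if "(?R X)\<^sup>*\<^sup>* x y" for x y
    using that
  proof (induction rule: rtranclp_induct)
    case (step a b)
    have "proj a = proj b \<or> ?R (X - {v}) a b"
    proof (cases "a = v \<or> b = v")
      case True
      then show ?thesis using step.hyps(2) sym[of a b] p_eq[of a] p_eq[of b] by (auto simp: proj_def)
    qed (use step.hyps(2) in auto)
    then show ?case
    proof
      assume "?R (X - {v}) a b"
      moreover from this have "(?R (X - {v}))\<^sup>*\<^sup>* (proj x) a"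
        using step.IH by (simp add: proj_def)
      ultimately have "(?R (X - {v}))\<^sup>*\<^sup>* (proj x) b"
        by (rule rtranclp.rtrancl_into_rtrancl[rotated])
      then show ?case using \<open>?R (X - {v}) a b\<close> by (simp add: proj_def)
    qed (use step.IH in simp)
  qed simp
  show ?thesis
    unfolding connected_on_iff_rtranclp
  proof (intro ballI)
    fix x y assume "x \<in> X - {v}" "y \<in> X - {v}"
    moreover from this have "(?R X)\<^sup>*\<^sup>* x y"
      using conn unfolding connected_on_iff_rtranclp by blast
    ultimately show "(?R (X - {v}))\<^sup>*\<^sup>* x y"
      using proj_reach[of x y] by (simp add: proj_def)
  qed
qed

definition forest :: "'b set \<Rightarrow> ('b \<Rightarrow> 'b \<Rightarrow> bool) \<Rightarrow> bool" where
  "forest V E \<longleftrightarrow> finite V \<and> (\<forall>x y. E x y \<longrightarrow> E y x \<and> x \<noteq> y) \<and> \<not> has_cycle V E"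

lemma is_tree_imp_forest: "is_tree V E \<Longrightarrow> forest V E"
  unfolding is_tree_def forest_def by blast

lemma forest_subset:
  assumes "forest V E" "W \<subseteq> V"
  shows "forest W E"
proof -
  have "has_cycle W E \<Longrightarrow> has_cycle V E"
    using assms(2) unfolding has_cycle_def is_path_def by blast
  with assms show ?thesis unfolding forest_def using finite_subset by blast
qed

lemma obtain_longest_distinct_path:
  assumes "finite V" "V \<noteq> {}"
  obtains m where "is_path E V m" "distinct m"
    "\<And>p. is_path E V p \<Longrightarrow> distinct p \<Longrightarrow> length p \<le> length m"
proof -
  define P where "P p \<longleftrightarrow> is_path E V p \<and> distinct p" for p
  obtain x where "x \<in> V" using assms(2) by blast
  then have "P [x]" by (simp add: P_def is_path_def)
  moreover have "length p < Suc (card V)" if "P p" for p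
  proof -
    have "set p \<subseteq> V" "distinct p" using that by (auto simp: P_def is_path_def)
    then have "length p = card (set p)" "card (set p) \<le> card V"
      by (simp add: distinct_card, simp add: card_mono[OF assms(1)])
    then show ?thesis by simp
  qed
  ultimately show thesis
    using that Lattices_Big.ex_has_greatest_nat[of P "[x]" length "Suc (card V)"]
    unfolding P_def by blast
qed

text \<open>The first vertex of a longest path has only one neighbour: any other one would either
  extend the path or close a cycle.\<close>
lemma forest_obtain_leaf:
  assumes "forest V E" "V \<noteq> {}"
  obtains v where "v \<in> V" "\<And>q q'. q \<in> V \<Longrightarrow> q' \<in> V \<Longrightarrow> E v q \<Longrightarrow> E v q' \<Longrightarrow> q = q'"
proof -
  from assms(1) have fin: "finite V" and sym: "\<And>x y. E x y \<Longrightarrow> E y x"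
    and irrefl: "\<And>x. \<not> E x x" and acyclic: "\<not> has_cycle V E"
    unfolding forest_def by blast+
  obtain m where m: "is_path E V m" "distinct m"
    and longest: "\<And>p. is_path E V p \<Longrightarrow> distinct p \<Longrightarrow> length p \<le> length m"
    using obtain_longest_distinct_path[OF fin assms(2)] by blast
  then obtain v rest where m_eq: "m = v # rest"
    unfolding is_path_def by (cases m) auto
  have neighbour: "rest \<noteq> [] \<and> q = hd rest" if "q \<in> V" "E v q" for q
  proof (cases "q \<in> set m")
    case False
    with m that sym[of v q] have "is_path E V (q # m)" "distinct (q # m)"
      by (auto simp: is_path_iff_successively m_eq)
    then show ?thesis using longest[of "q # m"] by simp
  next
    case True
    with irrefl[of v] that(2) m_eq obtain u r where rest_eq: "rest = u # r" and "q = u \<or> q \<in> set r"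
      by (cases rest) auto
    moreover have "q \<notin> set r"
    proof
      assume "q \<in> set r"
      then obtain r1 r2 where r_eq: "r = r1 @ q # r2" by (meson split_list)
      define c where "c = v # u # r1 @ [q]"
      have "m = c @ r2" unfolding c_def m_eq rest_eq r_eq by simp
      with m have "successively E c" "distinct c" "set c \<subseteq> V"
        by (auto simp: is_path_iff_successively successively_append_iff)
      then have "is_path E V c" "distinct c"
        by (auto simp: is_path_iff_successively c_def)
      moreover have "E (last c) (hd c)" using sym that(2) by (simp add: c_def)
      moreover have "length c \<ge> 3" by (simp add: c_def)
      ultimately have "has_cycle V E" unfolding has_cycle_def by blast
      with acyclic show False by contradiction
    qed
    ultimately show ?thesis by simp
  qed
  show thesis
  proof (rule that)
    show "v \<in> V" using m by (simp add: is_path_def m_eq)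
  next
    fix q q' assume "q \<in> V" "q' \<in> V" "E v q" "E v q'"
    then show "q = q'" using neighbour[of q] neighbour[of q'] by simp
  qed
qed

text \<open>Helly property of subtrees, by induction on the forest: delete a leaf \<open>v\<close>. A connected
  set containing \<open>v\<close> and another vertex also contains the unique neighbour of \<open>v\<close>, so pairwise
  intersections survive the deletion.\<close>
lemma forest_Helly3:
  assumes "forest V E" "A \<subseteq> V" "B \<subseteq> V" "C \<subseteq> V"
    and "connected_on E A" "connected_on E B" "connected_on E C"
    and "A \<inter> B \<noteq> {}" "A \<inter> C \<noteq> {}" "B \<inter> C \<noteq> {}"
  shows "A \<inter> B \<inter> C \<noteq> {}"
proof -
  from assms(1) have "finite V" unfolding forest_def by blast
  then show ?thesis
    using assms
  proof (induction V arbitrary: A B C rule: finite_psubset_induct)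
    case (psubset V)
    have sym: "\<And>x y. E x y \<Longrightarrow> E y x" and irrefl: "\<And>x. \<not> E x x"
      using psubset.prems(1) unfolding forest_def by blast+
    have "V \<noteq> {}" using psubset.prems(2,8) by blast
    then obtain v where "v \<in> V"
      and leaf: "\<And>q q'. q \<in> V \<Longrightarrow> q' \<in> V \<Longrightarrow> E v q \<Longrightarrow> E v q' \<Longrightarrow> q = q'"
      using forest_obtain_leaf[OF psubset.prems(1)] by blast
    show ?case
    proof (cases "A = {v} \<or> B = {v} \<or> C = {v}")
      case True
      with psubset.prems(8-10) show ?thesis by blast
    next
      case False
      have connected_Diff: "connected_on E (X - {v})" if X: "X \<subseteq> V" "connected_on E X" for X
      proof (rule connected_on_Diff_leaf[OF X(2) sym])
        fix q q' assume "q \<in> X" "q' \<in> X" "E v q" "E v q'"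
        with X(1) show "q = q'" by (intro leaf) auto
      qed
      have meet_Diff: "(X - {v}) \<inter> (Y - {v}) \<noteq> {}"
        if XY: "X \<subseteq> V" "Y \<subseteq> V" "connected_on E X" "connected_on E Y"
          "X \<noteq> {v}" "Y \<noteq> {v}" "X \<inter> Y \<noteq> {}" for X Y
      proof (cases "v \<in> X \<inter> Y")
        case True
        obtain x y where "x \<in> X" "x \<noteq> v" "y \<in> Y" "y \<noteq> v"
          using True XY(5,6) by blast
        obtain p p' where "p \<in> X" "E v p" "p' \<in> Y" "E v p'"
          using connected_on_neighbour[OF XY(3) _ \<open>x \<in> X\<close> \<open>x \<noteq> v\<close>]
            connected_on_neighbour[OF XY(4) _ \<open>y \<in> Y\<close> \<open>y \<noteq> v\<close>] True by auto
        moreover from this have "p = p'" using leaf XY(1,2) by blast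
        moreover have "p \<noteq> v" using \<open>E v p\<close> irrefl by blast
        ultimately show ?thesis by blast
      qed (use XY(7) in blast)
      have "V - {v} \<subset> V" using \<open>v \<in> V\<close> by blast
      moreover have "forest (V - {v}) E" using psubset.prems(1) by (rule forest_subset) blast
      ultimately have "(A - {v}) \<inter> (B - {v}) \<inter> (C - {v}) \<noteq> {}"
        using False psubset.prems
        by (intro psubset.IH connected_Diff meet_Diff) auto
      then show ?thesis by blast
    qed
  qed
qed

lemma forest_cyclic_chain_far_pair:
  fixes S :: "nat \<Rightarrow> 'b set"
  assumes "forest V E" "m \<ge> 1"
    and subtree: "\<And>i. 1 \<le> i \<Longrightarrow> i \<le> 4 * m \<Longrightarrow> S i \<subseteq> V \<and> connected_on E (S i)"
    and step: "\<And>i. 1 \<le> i \<Longrightarrow> i < 4 * m \<Longrightarrow> S i \<inter> S (Suc i) \<noteq> {}"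
    and wrap: "S (4 * m) \<inter> S 1 \<noteq> {}"
  shows "\<exists>w\<in>V. \<exists>i j. 1 \<le> i \<and> i < j \<and> j \<le> 4 * m \<and> w \<in> S i \<and> w \<in> S j
           \<and> min (j - i) (4 * m + i - j) \<ge> m"
proof -
  define arc where "arc a b = (\<Union>i\<in>{a..b}. S i)" for a b
  have arc_subset: "arc a b \<subseteq> V" if "1 \<le> a" "b \<le> 4 * m" for a b
    unfolding arc_def using that subtree by (meson UN_least atLeastAtMost_iff order.trans)
  have arc_connected: "connected_on E (arc a b)" if "1 \<le> a" "a \<le> b" "b \<le> 4 * m" for a b
    unfolding arc_def by (rule connected_on_UN_chain) (use that subtree step in simp_all)
  have arc_meet: "arc a b \<inter> arc c d \<noteq> {}"
    if "S i \<inter> S j \<noteq> {}" "i \<in> {a..b}" "j \<in> {c..d}" for a b c d i j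
    using that unfolding arc_def by blast
  have "arc 1 m \<inter> arc (m + 1) (2 * m) \<inter> arc (2 * m + 1) (4 * m) \<noteq> {}"
  proof (rule forest_Helly3[OF assms(1)])
    show "arc 1 m \<inter> arc (m + 1) (2 * m) \<noteq> {}"
      by (rule arc_meet[OF step[of m]]) (use assms(2) in simp_all)
    show "arc (m + 1) (2 * m) \<inter> arc (2 * m + 1) (4 * m) \<noteq> {}"
      by (rule arc_meet[OF step[of "2 * m"]]) (use assms(2) in simp_all)
    show "arc 1 m \<inter> arc (2 * m + 1) (4 * m) \<noteq> {}"
      by (subst Int_commute, rule arc_meet[OF wrap]) (use assms(2) in simp_all)
  qed (use assms(2) arc_subset arc_connected in simp_all)
  then obtain w a b c where "w \<in> S a" "w \<in> S b" "w \<in> S c"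
    and abc: "1 \<le> a" "a \<le> m" "m + 1 \<le> b" "b \<le> 2 * m" "2 * m + 1 \<le> c" "c \<le> 4 * m"
    unfolding arc_def by auto
  have "w \<in> V" using subtree \<open>w \<in> S a\<close> abc by force
  consider (b_c) "m \<le> c - b" | (a_c) "m \<le> c - a" "m \<le> 4 * m + a - c"
    using abc by linarith
  then show ?thesis
  proof cases
    case b_c
    then have "m \<le> min (c - b) (4 * m + b - c)" using abc by simp
    moreover have "1 \<le> b" "b < c" "c \<le> 4 * m" using abc by simp_all
    ultimately show ?thesis using \<open>w \<in> V\<close> \<open>w \<in> S b\<close> \<open>w \<in> S c\<close> by blast
  next
    case a_c
    then have "m \<le> min (c - a) (4 * m + a - c)" by simp
    moreover have "1 \<le> a" "a < c" "c \<le> 4 * m" using abc by simp_all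
    ultimately show ?thesis using \<open>w \<in> V\<close> \<open>w \<in> S a\<close> \<open>w \<in> S c\<close> by blast
  qed
qed

lemma ringed_verts_level: "l \<le> L \<Longrightarrow> 1 \<le> i \<Longrightarrow> i \<le> 2 ^ l \<Longrightarrow> (l, i) \<in> ringed_verts L"
  by (simp add: ringed_verts_def)

lemma ringed_edge_level_Suc:
  "l \<le> L \<Longrightarrow> 1 \<le> i \<Longrightarrow> i < 2 ^ l \<Longrightarrow> ringed_edge L (l, i) (l, Suc i)"
  by (simp add: ringed_edge_def ringed_arc_def ringed_verts_def)

lemma ringed_edge_level_wrap: "l \<le> L \<Longrightarrow> ringed_edge L (l, 2 ^ l) (l, 1)"
  by (simp add: ringed_edge_def ringed_arc_def ringed_verts_def)

theorem mainTheorem3: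
  fixes L l :: nat and VT :: "'b set" and ET :: "'b \<Rightarrow> 'b \<Rightarrow> bool"
    and phi :: "nat \<times> nat \<Rightarrow> 'b set"
  assumes "l \<ge> 2" and "L \<ge> l"
    and "tree_decomposition (ringed_verts L) (ringed_edge L) VT ET phi"
  shows "\<exists>w\<in>VT. \<exists>i j. 1 \<le> i \<and> i < j \<and> j \<le> 2 ^ l
           \<and> w \<in> phi (l, i) \<and> w \<in> phi (l, j)
           \<and> min (j - i) (2 ^ l + i - j) \<ge> 2 ^ (l - 2)"
proof -
  have "(2::nat) ^ l = 2 ^ (l - 2 + 2)" using assms(1) by (simp only: le_add_diff_inverse2)
  also have "\<dots> = 4 * 2 ^ (l - 2)" by simp
  finally have level: "(2::nat) ^ l = 4 * 2 ^ (l - 2)" .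
  have "is_tree VT ET" and subtree: "\<forall>x\<in>ringed_verts L. is_subtree VT ET (phi x)"
    and meet: "\<forall>x\<in>ringed_verts L. \<forall>y\<in>ringed_verts L. ringed_edge L x y \<longrightarrow> phi x \<inter> phi y \<noteq> {}"
    using assms(3) unfolding tree_decomposition_def by simp_all
  have vertex: "(l, i) \<in> ringed_verts L" if "1 \<le> i" "i \<le> 4 * 2 ^ (l - 2)" for i
    using ringed_verts_level[OF assms(2)] that level by simp
  show ?thesis
    unfolding level
  proof (rule forest_cyclic_chain_far_pair[OF is_tree_imp_forest[OF \<open>is_tree VT ET\<close>]])
    fix i :: nat assume "1 \<le> i" "i \<le> 4 * 2 ^ (l - 2)"
    then show "phi (l, i) \<subseteq> VT \<and> connected_on ET (phi (l, i))"
      using subtree vertex unfolding is_subtree_def by blast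
  next
    fix i :: nat assume "1 \<le> i" "i < 4 * 2 ^ (l - 2)"
    then show "phi (l, i) \<inter> phi (l, Suc i) \<noteq> {}"
      using meet vertex ringed_edge_level_Suc[OF assms(2)] level by simp
  next
    show "phi (l, 4 * 2 ^ (l - 2)) \<inter> phi (l, 1) \<noteq> {}"
      using meet vertex ringed_edge_level_wrap[OF assms(2)] level by simp
  qed simp
qed

end
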